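(* Let $n\ge4$. For $N\ge3$ let $B_N$ be the $\mathbb{Z}^N$-graded algebra $S^\bullet(V^{(1)})\otimes\cdots\otimes S^\bullet(V^{(N)})/(\sum_{i<j}R^{(i,j)})$ (equivalently $\mathcal O(\widetilde{\mathcal U}_{0,N}[\psi])$), and let $B^-_n\subset B_n$ be the sum of graded components of degrees in $\mathbb{Z}e_1+\cdots+\mathbb{Z}e_{n-1}\subset\mathbb{Z}^n$. Then there is a natural homomorphism $B_{n-1}\to B^-_n$ such that, as $\mathbb{Z}^{n-1}$-graded $B_{n-1}$-modules, $$B^-_n\simeq B_{n-1}\oplus\bigoplus_{1\le i\le n-1}\bigoplus_{a>0}B_{n-1}(-ae_i).$$
   Context: Over a field $\k$: for $1\le i\le N$, $V^{(i)}$ is the subspace of vectors with zero coordinate sum in $\bigoplus_{j\in[1,N]\setminus\{i\}}\k\,v^{(i)}_j$, placed in degree $e_i$; for $i<j$, $R^{(i,j)}\subset V^{(i)}\otimes V^{(j)}$ is spanned by $(v^{(i)}_k-v^{(i)}_j)\otimes(v^{(j)}_k-v^{(j)}_i)-(v^{(i)}_l-v^{(i)}_j)\otimes(v^{(j)}_l-v^{(j)}_i)$ for $k,l\in[1,N]\setminus\{i,j\}$. $\widetilde{\mathcal U}_{0,N}[\psi]$ is the moduli space of reduced connected genus $0$ curves with $N$ distinct smooth points $p_i$ such that $\mathcal O(\sum p_i)$ is ample, and nonzero tangent vectors at the $p_i$. $M(d)$ denotes the shift $M(d)_c=M_{c+d}$. *)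

theory Defs
  imports "HOL-Library.Poly_Mapping"
begin

text \<open>Ambient polynomial ring: the symmetric algebra of
  W = (direct sum over i, j with i ~= j of k v^(i)_j); the variable indexed by (i,j) is v^(i)_j.
  S(V^(1)) (x) ... (x) S(V^(N)) is the subalgebra generated by the V^(i).\<close>

type_synonym 'k mpoly = "(nat \<times> nat \<Rightarrow>\<^sub>0 nat) \<Rightarrow>\<^sub>0 'k"

definition var :: "nat \<Rightarrow> nat \<Rightarrow> 'k::comm_ring_1 mpoly" where
  "var i j = Poly_Mapping.single (Poly_Mapping.single (i, j) 1) 1"

definition const :: "'k::comm_ring_1 \<Rightarrow> 'k mpoly" where
  "const c = Poly_Mapping.single 0 c"

definition Vspace :: "nat \<Rightarrow> nat \<Rightarrow> 'k::comm_ring_1 mpoly set" where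
  "Vspace N i = {(\<Sum>j\<in>{1..N} - {i}. const (c j) * var i j) | c. (\<Sum>j\<in>{1..N} - {i}. c j) = 0}"

inductive_set Salg :: "nat \<Rightarrow> 'k::comm_ring_1 mpoly set" for N where
  const: "const c \<in> Salg N"
| gen: "1 \<le> i \<Longrightarrow> i \<le> N \<Longrightarrow> v \<in> Vspace N i \<Longrightarrow> v \<in> Salg N"
| add: "p \<in> Salg N \<Longrightarrow> q \<in> Salg N \<Longrightarrow> p + q \<in> Salg N"
| mult: "p \<in> Salg N \<Longrightarrow> q \<in> Salg N \<Longrightarrow> p * q \<in> Salg N"

definition Rgen :: "nat \<Rightarrow> 'k::comm_ring_1 mpoly set" where
  "Rgen N = {(var i k - var i j) * (var j k - var j i) - (var i l - var i j) * (var j l - var j i)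
             | i j k l. 1 \<le> i \<and> i < j \<and> j \<le> N \<and>
                 k \<in> {1..N} - {i, j} \<and> l \<in> {1..N} - {i, j}}"

inductive_set Rideal :: "nat \<Rightarrow> 'k::comm_ring_1 mpoly set" for N where
  zero: "0 \<in> Rideal N"
| gen: "a \<in> Salg N \<Longrightarrow> r \<in> Rgen N \<Longrightarrow> a * r \<in> Rideal N"
| add: "p \<in> Rideal N \<Longrightarrow> q \<in> Rideal N \<Longrightarrow> p + q \<in> Rideal N"

text \<open>B_N = Salg N / Rideal N. Z^N-grading: the degree of a monomial in direction e_i
  is its total exponent in the variables v^(i)_j.\<close>
definition blockdeg :: "(nat \<times> nat \<Rightarrow>\<^sub>0 nat) \<Rightarrow> nat \<Rightarrow> nat" where
  "blockdeg m i = (\<Sum>v\<in>Poly_Mapping.keys m. if fst v = i then Poly_Mapping.lookup m v else 0)"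

definition homog :: "(nat \<Rightarrow> nat) \<Rightarrow> 'k::comm_ring_1 mpoly \<Rightarrow> bool" where
  "homog d p \<longleftrightarrow> (\<forall>m\<in>Poly_Mapping.keys p. \<forall>i. blockdeg m i = d i)"

definition Bminus_rep :: "nat \<Rightarrow> 'k::comm_ring_1 mpoly set" where
  "Bminus_rep n = {p \<in> Salg n. \<forall>m\<in>Poly_Mapping.keys p. blockdeg m n = 0}"

definition shift_idx :: "nat \<Rightarrow> (nat \<times> nat) set" where
  "shift_idx n = {(i, a). 1 \<le> i \<and> i \<le> n - 1 \<and> 0 < a}"

end

theory Submission
  imports Defs "HOL-Computational_Algebra.Formal_Laurent_Series"
begin

text \<open>Put t_i = v^(i)_n - v^(i)_r(i) for i < n, where r(i) is a fixed index different from i and n.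
  Then B^-_n is generated over B_(n-1) by the t_i, and the relation R^(i,j) with index n rewrites
  t_i t_j (i ~= j) as a B_(n-1)-linear combination of t_i, t_j and 1; hence 1 and the powers t_i^a
  span B^-_n over B_(n-1).

  For independence fix k < n and substitute Laurent series in X: t_k = X^-1, while every other t_i
  becomes a power series in X, determined by R^(k,i). All relations hold there modulo the ideal
  generated by the relations of B_(n-1) in the ambient polynomial ring, so in a vanishing combination
  the coefficient of X^-a shows that the coefficient of t_k^a lies in that ideal, and then so does
  the constant term. Finally, the substitution v^(i)_j \<mapsto> v^(i)_j - v^(i)_r(i) retracts the
  ambient ring onto S(V^(1)) \<otimes> ... \<otimes> S(V^(n-1)) and fixes the relations, so the ambient ideal
  meets this subalgebra exactly in the ideal of relations.\<close>

section \<open>Evaluation of polynomials\<close>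

definition eval_monom :: "('v \<Rightarrow> 'r::comm_semiring_1) \<Rightarrow> ('v \<Rightarrow>\<^sub>0 nat) \<Rightarrow> 'r" where
  "eval_monom f m = (\<Prod>v\<in>Poly_Mapping.keys m. f v ^ Poly_Mapping.lookup m v)"

lemma eval_monom_superset:
  assumes "finite S" "Poly_Mapping.keys m \<subseteq> S"
  shows "eval_monom f m = (\<Prod>v\<in>S. f v ^ Poly_Mapping.lookup m v)"
  unfolding eval_monom_def
  by (rule prod.mono_neutral_left) (use assms in \<open>auto simp: in_keys_iff\<close>)

lemma eval_monom_add: "eval_monom f (a + b) = eval_monom f a * eval_monom f b"
proof -
  let ?S = "Poly_Mapping.keys a \<union> Poly_Mapping.keys b"
  have "eval_monom f (a + b) = (\<Prod>v\<in>?S. f v ^ Poly_Mapping.lookup a v * f v ^ Poly_Mapping.lookup b v)"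
    by (subst eval_monom_superset[of ?S]) (use keys_add[of a b] in \<open>auto simp: lookup_add power_add\<close>)
  also have "\<dots> = eval_monom f a * eval_monom f b"
    by (simp add: prod.distrib eval_monom_superset[of ?S])
  finally show ?thesis .
qed

lemma poly_mapping_sum_single:
  "p = (\<Sum>m\<in>Poly_Mapping.keys p. Poly_Mapping.single m (Poly_Mapping.lookup p m))"
proof (rule poly_mapping_eqI)
  fix k
  show "Poly_Mapping.lookup p k =
      Poly_Mapping.lookup (\<Sum>m\<in>Poly_Mapping.keys p. Poly_Mapping.single m (Poly_Mapping.lookup p m)) k"
    by (cases "k \<in> Poly_Mapping.keys p") (auto simp: lookup_sum lookup_single when_def in_keys_iff)
qed

locale coeff_hom =
  fixes h :: "'k::comm_ring_1 \<Rightarrow> 'r::comm_ring_1"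
  assumes h_0: "h 0 = 0" and h_1: "h 1 = 1"
    and h_add: "\<And>a b. h (a + b) = h a + h b" and h_mult: "\<And>a b. h (a * b) = h a * h b"
begin

definition eval_poly :: "('v \<Rightarrow> 'r) \<Rightarrow> (('v \<Rightarrow>\<^sub>0 nat) \<Rightarrow>\<^sub>0 'k) \<Rightarrow> 'r" where
  "eval_poly f p = (\<Sum>m\<in>Poly_Mapping.keys p. h (Poly_Mapping.lookup p m) * eval_monom f m)"

lemma eval_poly_superset:
  assumes "finite S" "Poly_Mapping.keys p \<subseteq> S"
  shows "eval_poly f p = (\<Sum>m\<in>S. h (Poly_Mapping.lookup p m) * eval_monom f m)"
  unfolding eval_poly_def
  by (rule sum.mono_neutral_left) (use assms in \<open>auto simp: in_keys_iff h_0\<close>)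

lemma eval_poly_add: "eval_poly f (p + q) = eval_poly f p + eval_poly f q"
proof -
  let ?S = "Poly_Mapping.keys p \<union> Poly_Mapping.keys q"
  have "eval_poly f (p + q) = (\<Sum>m\<in>?S. h (Poly_Mapping.lookup p m) * eval_monom f m
                                         + h (Poly_Mapping.lookup q m) * eval_monom f m)"
    by (subst eval_poly_superset[of ?S]) (use keys_add[of p q] in \<open>auto simp: lookup_add h_add algebra_simps\<close>)
  also have "\<dots> = eval_poly f p + eval_poly f q"
    by (simp add: sum.distrib eval_poly_superset[of ?S])
  finally show ?thesis .
qed

lemma eval_poly_zero [simp]: "eval_poly f 0 = 0"
  by (simp add: eval_poly_def)

lemma eval_poly_single: "eval_poly f (Poly_Mapping.single m c) = h c * eval_monom f m"
  by (subst eval_poly_superset[of "{m}"]) (auto simp: lookup_single)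

lemma eval_poly_sum: "eval_poly f (\<Sum>x\<in>A. g x) = (\<Sum>x\<in>A. eval_poly f (g x))"
  by (induction A rule: infinite_finite_induct) (auto simp: eval_poly_add)

lemma eval_poly_mult: "eval_poly f (p * q) = eval_poly f p * eval_poly f q"
proof -
  have "p * q = (\<Sum>m\<in>Poly_Mapping.keys p. \<Sum>m'\<in>Poly_Mapping.keys q.
      Poly_Mapping.single (m + m') (Poly_Mapping.lookup p m * Poly_Mapping.lookup q m'))"
    by (subst poly_mapping_sum_single[of p], subst poly_mapping_sum_single[of q])
       (simp add: sum_product mult_single)
  then have "eval_poly f (p * q) = (\<Sum>m\<in>Poly_Mapping.keys p. \<Sum>m'\<in>Poly_Mapping.keys q.
      (h (Poly_Mapping.lookup p m) * eval_monom f m) * (h (Poly_Mapping.lookup q m') * eval_monom f m'))"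
    by (simp add: eval_poly_sum eval_poly_single h_mult eval_monom_add algebra_simps)
  also have "\<dots> = eval_poly f p * eval_poly f q"
    by (simp add: eval_poly_def sum_product)
  finally show ?thesis .
qed

lemma eval_poly_diff: "eval_poly f (p - q) = eval_poly f p - eval_poly f q"
  using eval_poly_add[of f "p - q" q] by (simp add: algebra_simps)

lemma eval_poly_one: "eval_poly f 1 = 1"
  by (simp add: eval_poly_single h_1 eval_monom_def flip: single_one)

lemma eval_poly_power: "eval_poly f (p ^ n) = eval_poly f p ^ n"
  by (induction n) (auto simp: eval_poly_one eval_poly_mult)

lemma eval_poly_const: "eval_poly f (const c) = h c"
  by (simp add: const_def eval_poly_single eval_monom_def)

lemma eval_poly_var: "eval_poly f (var i j) = f (i, j)"
  by (simp add: var_def eval_poly_single h_1 eval_monom_def)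

end

lemma const_0: "const 0 = (0 :: 'k::comm_ring_1 mpoly)"
  and const_1: "const 1 = (1 :: 'k::comm_ring_1 mpoly)"
  and const_add: "const (a + b) = const a + (const b :: 'k::comm_ring_1 mpoly)"
  and const_mult: "const (a * b) = const a * (const b :: 'k::comm_ring_1 mpoly)"
  by (simp_all add: const_def single_add mult_single flip: single_one)

lemma const_uminus: "const (- a) = - (const a :: 'k::comm_ring_1 mpoly)"
  by (simp add: const_def single_uminus)

lemma const_diff: "const (a - b) = const a - (const b :: 'k::comm_ring_1 mpoly)"
  by (simp add: const_def single_diff)

lemma const_sum: "const (\<Sum>x\<in>A. g x) = (\<Sum>x\<in>A. const (g x) :: 'k::comm_ring_1 mpoly)"
  by (induction A rule: infinite_finite_induct) (auto simp: const_0 const_add)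

interpretation subst: coeff_hom "const :: 'k::comm_ring_1 \<Rightarrow> 'k mpoly"
  by unfold_locales (simp_all add: const_0 const_1 const_add const_mult)

interpretation laurent: coeff_hom "\<lambda>c. fls_const (const c :: 'k::comm_ring_1 mpoly)"
  by unfold_locales (simp_all add: const_0 const_1 const_add const_mult fls_plus_const)

section \<open>The subalgebra and its ideal of relations\<close>

lemma Salg_zero: "0 \<in> Salg N"
  using Salg.const[of 0 N] by (simp add: const_0)

lemma Salg_one: "1 \<in> Salg N"
  using Salg.const[of 1 N] by (simp add: const_1)

lemma Salg_uminus:
  assumes "p \<in> Salg N"
  shows "- p \<in> Salg N"
proof -
  have "const (- 1) * p \<in> Salg N"
    using Salg.mult[OF Salg.const assms] .
  then show ?thesis
    by (simp add: const_uminus const_1)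
qed

lemma Salg_diff: "p \<in> Salg N \<Longrightarrow> q \<in> Salg N \<Longrightarrow> p - q \<in> Salg N"
  using Salg.add[OF _ Salg_uminus] by fastforce

lemma Salg_sum:
  "(\<And>x. x \<in> A \<Longrightarrow>
   g x \<in> Salg N) \<Longrightarrow>
   (\<Sum>x\<in>A. g x) \<in> Salg N"
  by (induction A rule: infinite_finite_induct) (auto intro: Salg_zero Salg.add)

lemma Salg_prod:
  "(\<And>x. x \<in> A \<Longrightarrow>
   g x \<in> Salg N) \<Longrightarrow>
   (\<Prod>x\<in>A. g x) \<in> Salg N"
  by (induction A rule: infinite_finite_induct) (auto intro: Salg_one Salg.mult)

lemma Salg_power: "p \<in> Salg N \<Longrightarrow> p ^ k \<in> Salg N"
  by (induction k) (auto intro: Salg_one Salg.mult)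

lemma var_diff_in_Vspace:
  assumes "j \<in> {1..N} - {i}" "k \<in> {1..N} - {i}"
  shows "var i j - var i k \<in> Vspace N i"
proof -
  define c where "c x = (if x = j then 1 else 0) - (if x = k then 1 else (0::'a))" for x
  have "(\<Sum>x\<in>{1..N} - {i}. c x) = 0"
    using assms by (simp add: c_def sum_subtractf)
  moreover have "var i j - var i k = (\<Sum>x\<in>{1..N} - {i}. const (c x) * var i x)"
  proof -
    have "(\<Sum>x\<in>{1..N} - {i}. const (c x) * var i x)
        = (\<Sum>x\<in>{1..N} - {i}. (if x = j then var i x else 0) - (if x = k then var i x else 0))"
      by (rule sum.cong) (auto simp: c_def const_diff const_0 const_1)
    also have "\<dots> = var i j - var i k"
      using assms by (simp add: sum_subtractf)
    finally show ?thesis ..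
  qed
  ultimately show ?thesis
    unfolding Vspace_def by blast
qed

lemma var_diff_in_Salg:
  "i \<in> {1..N} \<Longrightarrow> j \<in> {1..N} - {i} \<Longrightarrow> k \<in> {1..N} - {i} \<Longrightarrow> var i j - var i k \<in> Salg N"
  by (rule Salg.gen[OF _ _ var_diff_in_Vspace]) auto

lemma Vspace_mono:
  assumes "N \<le> N'" "v \<in> Vspace N i"
  shows "v \<in> Vspace N' i"
proof -
  obtain c where v: "v = (\<Sum>j\<in>{1..N} - {i}. const (c j) * var i j)"
    and s: "(\<Sum>j\<in>{1..N} - {i}. c j) = 0"
    using assms(2) unfolding Vspace_def by blast
  define c' where "c' j = (if j \<le> N then c j else 0)" for j
  have "(\<Sum>j\<in>{1..N'} - {i}. c' j) = (\<Sum>j\<in>{1..N} - {i}. c' j)"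
    by (rule sum.mono_neutral_right) (use assms in \<open>auto simp: c'_def\<close>)
  then have s': "(\<Sum>j\<in>{1..N'} - {i}. c' j) = 0"
    using s by (simp add: c'_def)
  have "(\<Sum>j\<in>{1..N'} - {i}. const (c' j) * var i j) = (\<Sum>j\<in>{1..N} - {i}. const (c' j) * var i j)"
    by (rule sum.mono_neutral_right) (use assms in \<open>auto simp: c'_def const_0\<close>)
  then have "v = (\<Sum>j\<in>{1..N'} - {i}. const (c' j) * var i j)"
    by (simp add: v c'_def)
  with s' show ?thesis
    unfolding Vspace_def by blast
qed

lemma Salg_mono:
  assumes "N \<le> N'" "p \<in> Salg N"
  shows "p \<in> Salg N'"
  using assms(2)
proof (induction p rule: Salg.induct)
  case (gen i v)
  then show ?case
    using assms(1) Vspace_mono[OF assms(1) gen(3)] by (intro Salg.gen[of i N' v]) auto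
qed (auto intro: Salg.intros)

definition quad :: "nat \<Rightarrow> nat \<Rightarrow> nat \<Rightarrow> 'k::comm_ring_1 mpoly" where
  "quad i j x = (var i x - var i j) * (var j x - var j i)"

lemma quad_commute: "quad i j x = quad j i x"
  by (simp add: quad_def mult.commute)

lemma Rgen_eq_quad_diffs:
  "Rgen N = {quad i j k - quad i j l | i j k l. 1 \<le> i \<and> i < j \<and> j \<le> N \<and>
                 k \<in> {1..N} - {i, j} \<and> l \<in> {1..N} - {i, j}}"
  unfolding Rgen_def quad_def ..

lemma quad_diff_in_Rgen:
  assumes "i \<in> {1..N}" "j \<in> {1..N}" "i \<noteq> j" "x \<in> {1..N} - {i, j}" "y \<in> {1..N} - {i, j}"
  shows "quad i j x - quad i j y \<in> Rgen N"
proof (cases "i < j")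
  case True
  then show ?thesis
    unfolding Rgen_eq_quad_diffs using assms
    by (intro CollectI exI[of _ i] exI[of _ j] exI[of _ x] exI[of _ y]) auto
next
  case False
  then have "quad j i x - quad j i y \<in> Rgen N"
    unfolding Rgen_eq_quad_diffs using assms
    by (intro CollectI exI[of _ j] exI[of _ i] exI[of _ x] exI[of _ y]) auto
  then show ?thesis
    by (simp add: quad_commute[of i j])
qed

lemma Rgen_subset_Salg: "Rgen N \<subseteq> (Salg N :: 'k::comm_ring_1 mpoly set)"
proof
  fix r :: "'k mpoly"
  assume "r \<in> Rgen N"
  then obtain i j k l where r: "r = quad i j k - quad i j l"
    and "1 \<le> i" "i < j" "j \<le> N" "k \<in> {1..N} - {i, j}" "l \<in> {1..N} - {i, j}"
    unfolding Rgen_eq_quad_diffs by blast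
  then show "r \<in> Salg N"
    unfolding r quad_def by (intro Salg_diff Salg.mult var_diff_in_Salg) auto
qed

lemma Rideal_mult: "p \<in> Rideal N \<Longrightarrow> s \<in> Salg N \<Longrightarrow> s * p \<in> Rideal N"
proof (induction p rule: Rideal.induct)
  case (gen a r)
  then show ?case
    using Rideal.gen[OF Salg.mult[OF gen(3) gen(1)] gen(2)] by (simp add: mult.assoc)
qed (auto simp: distrib_left intro: Rideal.intros)

lemma Rgen_subset_Rideal: "Rgen N \<subseteq> Rideal N"
  using Rideal.gen[OF Salg_one] by fastforce

inductive_set ambient_Rideal :: "nat \<Rightarrow> 'k::comm_ring_1 mpoly set" for N where
  zero: "0 \<in> ambient_Rideal N"
| gen: "r \<in> Rgen N \<Longrightarrow> a * r \<in> ambient_Rideal N"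
| add: "p \<in> ambient_Rideal N \<Longrightarrow> q \<in> ambient_Rideal N \<Longrightarrow> p + q \<in> ambient_Rideal N"

lemma ambient_Rideal_mult: "p \<in> ambient_Rideal N \<Longrightarrow> s * p \<in> ambient_Rideal N"
proof (induction p rule: ambient_Rideal.induct)
  case (gen r a)
  then show ?case
    using ambient_Rideal.gen[OF gen(1), of "s * a"] by (simp add: mult.assoc)
qed (auto simp: distrib_left intro: ambient_Rideal.intros)

lemma ambient_Rideal_mult_right: "p \<in> ambient_Rideal N \<Longrightarrow> p * s \<in> ambient_Rideal N"
  using ambient_Rideal_mult by (simp add: mult.commute)

lemma ambient_Rideal_diff:
  "p \<in> ambient_Rideal N \<Longrightarrow>
   q \<in> ambient_Rideal N \<Longrightarrow>
   p - q \<in> ambient_Rideal N"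
  using ambient_Rideal.add[OF _ ambient_Rideal_mult[of q N "-1"]] by fastforce

lemma ambient_Rideal_sum:
  "(\<And>x. x \<in> A \<Longrightarrow>
   g x \<in> ambient_Rideal N) \<Longrightarrow>
   (\<Sum>x\<in>A. g x) \<in> ambient_Rideal N"
  by (induction A rule: infinite_finite_induct) (auto intro: ambient_Rideal.zero ambient_Rideal.add)

lemma Rgen_subset_ambient_Rideal: "Rgen N \<subseteq> ambient_Rideal N"
  using ambient_Rideal.gen[of _ N 1] by fastforce

definition ref_index :: "nat \<Rightarrow> nat" where
  "ref_index i = (if i = 1 then 2 else 1)"

lemma ref_index_in: "2 \<le> N \<Longrightarrow> ref_index i \<in> {1..N} - {i}"
  by (auto simp: ref_index_def)

definition rvar :: "nat \<Rightarrow> nat \<Rightarrow> 'k::comm_ring_1 mpoly" where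
  "rvar i j = var i j - var i (ref_index i)"

lemma rvar_in_Salg:
  "2 \<le> N \<Longrightarrow>
   i \<in> {1..N} \<Longrightarrow>
   j \<in> {1..N} - {i} \<Longrightarrow>
   rvar i j \<in> Salg N"
  unfolding rvar_def by (intro var_diff_in_Salg ref_index_in)

definition retract_var :: "nat \<Rightarrow> nat \<times> nat \<Rightarrow> 'k::comm_ring_1 mpoly" where
  "retract_var N v =
     (if fst v \<in> {1..N} \<and> snd v \<in> {1..N} - {fst v} then rvar (fst v) (snd v) else 0)"

lemma retract_in_Salg: "2 \<le> N \<Longrightarrow> subst.eval_poly (retract_var N) p \<in> Salg N"
  unfolding subst.eval_poly_def eval_monom_def retract_var_def
  by (intro Salg_sum Salg.mult Salg.const Salg_prod Salg_power) (auto intro: rvar_in_Salg Salg_zero)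

lemma retract_fixes_Salg: "q \<in> Salg N \<Longrightarrow> subst.eval_poly (retract_var N) q = q"
proof (induction q rule: Salg.induct)
  case (const c)
  then show ?case by (simp add: subst.eval_poly_const)
next
  case (gen i v)
  then obtain c where v: "v = (\<Sum>j\<in>{1..N} - {i}. const (c j) * var i j)"
    and s: "(\<Sum>j\<in>{1..N} - {i}. c j) = 0"
    unfolding Vspace_def by blast
  have "subst.eval_poly (retract_var N) v = (\<Sum>j\<in>{1..N} - {i}. const (c j) * (var i j - var i (ref_index i)))"
    using gen by (simp add: v subst.eval_poly_sum subst.eval_poly_mult subst.eval_poly_const
        subst.eval_poly_var retract_var_def rvar_def)
  also have "\<dots> = v - const (\<Sum>j\<in>{1..N} - {i}. c j) * var i (ref_index i)"
    by (simp add: v right_diff_distrib sum_subtractf sum_distrib_right const_sum)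
  finally show ?case
    using s by (simp add: const_0)
qed (auto simp: subst.eval_poly_add subst.eval_poly_mult)

lemma Salg_Int_ambient_Rideal:
  fixes q :: "'k::comm_ring_1 mpoly"
  assumes N: "2 \<le> N" and q: "q \<in> Salg N" "q \<in> ambient_Rideal N"
  shows "q \<in> Rideal N"
proof -
  have "subst.eval_poly (retract_var N) p \<in> Rideal N" if "p \<in> ambient_Rideal N" for p :: "'k mpoly"
    using that
  proof (induction p rule: ambient_Rideal.induct)
    case (gen r a)
    have "subst.eval_poly (retract_var N) (a * r) = subst.eval_poly (retract_var N) a * r"
      using retract_fixes_Salg[of r N] Rgen_subset_Salg[of N] gen by (auto simp: subst.eval_poly_mult)
    then show ?case
      using Rideal.gen[OF retract_in_Salg[OF N] gen] by simp
  qed (auto simp: subst.eval_poly_add intro: Rideal.intros)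
  from this[OF q(2)] show ?thesis
    using retract_fixes_Salg[OF q(1)] by simp
qed

lemma blockdeg_superset:
  assumes "finite S" "Poly_Mapping.keys m \<subseteq> S"
  shows "blockdeg m i = (\<Sum>v\<in>S. if fst v = i then Poly_Mapping.lookup m v else 0)"
  unfolding blockdeg_def
  by (rule sum.mono_neutral_left) (use assms in \<open>auto simp: in_keys_iff\<close>)

lemma blockdeg_add: "blockdeg (a + b) i = blockdeg a i + blockdeg b i"
proof -
  let ?S = "Poly_Mapping.keys a \<union> Poly_Mapping.keys b"
  have "blockdeg (a + b) i = (\<Sum>v\<in>?S. if fst v = i then Poly_Mapping.lookup (a + b) v else 0)"
    by (rule blockdeg_superset) (use keys_add[of a b] in auto)
  also have "\<dots> = (\<Sum>v\<in>?S. (if fst v = i then Poly_Mapping.lookup a v else 0)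
                           + (if fst v = i then Poly_Mapping.lookup b v else 0))"
    by (rule sum.cong) (simp_all add: lookup_add)
  also have "\<dots> = blockdeg a i + blockdeg b i"
    by (simp add: sum.distrib blockdeg_superset[of ?S])
  finally show ?thesis .
qed

lemma blockdeg_eq_0_keys:
  assumes "blockdeg m i = 0" "v \<in> Poly_Mapping.keys m"
  shows "fst v \<noteq> i"
proof
  assume "fst v = i"
  have "(if fst v = i then Poly_Mapping.lookup m v else 0) = 0"
    using assms unfolding blockdeg_def by (subst (asm) sum_eq_0_iff) auto
  then show False
    using \<open>fst v = i\<close> assms(2) by (simp add: in_keys_iff)
qed

lemma homog_one: "homog (\<lambda>_. 0) (1 :: 'k::comm_ring_1 mpoly)"
  by (simp add: homog_def blockdeg_def flip: single_one)

lemma homog_mult: "homog d p \<Longrightarrow> homog e q \<Longrightarrow> homog (\<lambda>i. d i + e i) (p * q)"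
  unfolding homog_def using keys_mult[of p q] by (fastforce simp: blockdeg_add)

lemma homog_diff: "homog d p \<Longrightarrow> homog d q \<Longrightarrow> homog d (p - q)"
  using keys_diff[of p q] unfolding homog_def by blast

lemma homog_var: "homog (\<lambda>i'. if i' = i then 1 else 0) (var i j :: 'k::comm_ring_1 mpoly)"
  by (simp add: homog_def var_def blockdeg_def)

lemma homog_power: "homog d p \<Longrightarrow> homog (\<lambda>i. k * d i) (p ^ k :: 'k::comm_ring_1 mpoly)"
proof (induction k)
  case 0
  then show ?case using homog_one by simp
next
  case (Suc k)
  then show ?case using homog_mult[of d p "\<lambda>i. k * d i" "p ^ k"] by simp
qed

lemma homog_rvar_power:
  "homog (\<lambda>i'. if i' = i then a else 0) (rvar i j ^ a :: 'k::comm_ring_1 mpoly)"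
proof -
  have "homog (\<lambda>i'. if i' = i then 1 else 0) (rvar i j :: 'k mpoly)"
    unfolding rvar_def by (intro homog_diff homog_var)
  from homog_power[OF this, of a] show ?thesis
    by (simp add: if_distrib cong: if_cong)
qed

section \<open>Spanning\<close>

definition third_index :: "nat \<Rightarrow> nat \<Rightarrow> nat" where
  "third_index i j = (if 1 \<notin> {i, j} then 1 else if 2 \<notin> {i, j} then 2 else 3)"

lemma third_index_in: "4 \<le> n \<Longrightarrow> third_index i j \<in> {1..n - 1} - {i, j}"
  by (auto simp: third_index_def)

lemma quad_in_Salg:
  "i \<in> {1..N} \<Longrightarrow> j \<in> {1..N} \<Longrightarrow> i \<noteq> j \<Longrightarrow> x \<in> {1..N} - {i, j} \<Longrightarrow> quad i j x \<in> Salg N"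
  unfolding quad_def by (intro Salg.mult var_diff_in_Salg) auto

text \<open>\<open>tpow n (i, a)\<close> is t_i^a, the generator of the summand B_(n-1)(-a e_i).\<close>

definition tpow :: "nat \<Rightarrow> nat \<times> nat \<Rightarrow> 'k::comm_ring_1 mpoly" where
  "tpow n x = rvar (fst x) n ^ snd x"

definition tcomb :: "nat \<Rightarrow> 'k::comm_ring_1 mpoly \<Rightarrow> (nat \<times> nat \<Rightarrow> 'k mpoly) \<Rightarrow> 'k mpoly" where
  "tcomb n c0 c = c0 + (\<Sum>x\<in>{x. c x \<noteq> 0}. c x * tpow n x)"

definition admissible_coeffs :: "nat \<Rightarrow> 'k::comm_ring_1 mpoly \<Rightarrow> (nat \<times> nat \<Rightarrow> 'k mpoly) \<Rightarrow> bool" where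
  "admissible_coeffs n c0 c \<longleftrightarrow> c0 \<in> Salg (n - 1) \<and> finite {x. c x \<noteq> 0} \<and>
     {x. c x \<noteq> 0} \<subseteq> shift_idx n \<and> (\<forall>x. c x \<in> Salg (n - 1))"

definition spanned :: "nat \<Rightarrow> 'k::comm_ring_1 mpoly \<Rightarrow> bool" where
  "spanned n q \<longleftrightarrow> (\<exists>c0 c. admissible_coeffs n c0 c \<and> q - tcomb n c0 c \<in> Rideal n)"

lemma sum_support_superset:
  assumes "finite F" "{x. c x \<noteq> 0} \<subseteq> F"
  shows "(\<Sum>x\<in>{x. c x \<noteq> 0}. c x * g x) = (\<Sum>x\<in>F. c x * (g x :: 'a::comm_ring_1))"
  by (rule sum.mono_neutral_left) (use assms in auto)

lemma tcomb_add:
  assumes "finite {x. c x \<noteq> 0}" "finite {x. d x \<noteq> 0}"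
  shows "tcomb n (c0 + d0) (\<lambda>x. c x + d x) = tcomb n c0 c + tcomb n d0 d"
proof -
  let ?U = "{x. c x \<noteq> 0} \<union> {x. d x \<noteq> 0}"
  have fin: "finite ?U"
    using assms by simp
  have sub: "{x. c x \<noteq> 0} \<subseteq> ?U" "{x. d x \<noteq> 0} \<subseteq> ?U" "{x. c x + d x \<noteq> 0} \<subseteq> ?U"
    by auto
  show ?thesis
    unfolding tcomb_def sum_support_superset[OF fin sub(1)] sum_support_superset[OF fin sub(2)]
      sum_support_superset[OF fin sub(3)]
    by (simp add: distrib_right sum.distrib)
qed

lemma tcomb_mult:
  assumes "finite {x. c x \<noteq> 0}"
  shows "tcomb n (s * c0) (\<lambda>x. s * c x) = s * tcomb n c0 c"
proof -
  have "(\<Sum>x\<in>{x. s * c x \<noteq> 0}. s * c x * tpow n x) = (\<Sum>x\<in>{x. c x \<noteq> 0}. s * c x * tpow n x)"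
    by (rule sum_support_superset[OF assms]) auto
  then show ?thesis
    unfolding tcomb_def by (simp add: distrib_left sum_distrib_left mult.assoc)
qed

lemma admissible_coeffs_add:
  assumes "admissible_coeffs n c0 c" "admissible_coeffs n d0 d"
  shows "admissible_coeffs n (c0 + d0) (\<lambda>x. c x + d x)"
proof -
  have sub: "{x. c x + d x \<noteq> 0} \<subseteq> {x. c x \<noteq> 0} \<union> {x. d x \<noteq> 0}"
    by auto
  then show ?thesis
    using assms finite_subset[OF sub] unfolding admissible_coeffs_def by (auto intro: Salg.add)
qed

lemma admissible_coeffs_mult:
  assumes "s \<in> Salg (n - 1)" "admissible_coeffs n c0 c"
  shows "admissible_coeffs n (s * c0) (\<lambda>x. s * c x)"
proof -
  have sub: "{x. s * c x \<noteq> 0} \<subseteq> {x. c x \<noteq> 0}"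
    by auto
  then show ?thesis
    using assms finite_subset[OF sub] unfolding admissible_coeffs_def by (auto intro: Salg.mult)
qed

lemma spanned_Salg: "q \<in> Salg (n - 1) \<Longrightarrow> spanned n q"
  unfolding spanned_def admissible_coeffs_def tcomb_def
  by (intro exI[of _ q] exI[of _ "\<lambda>_. 0"]) (simp add: Salg_zero Rideal.zero)

lemma spanned_add:
  assumes "spanned n q" "spanned n q'"
  shows "spanned n (q + q')"
proof -
  obtain c0 c d0 d where
    adm: "admissible_coeffs n c0 c" "admissible_coeffs n d0 d" and
    R: "q - tcomb n c0 c \<in> Rideal n" "q' - tcomb n d0 d \<in> Rideal n"
    using assms unfolding spanned_def by blast
  have "q + q' - tcomb n (c0 + d0) (\<lambda>x. c x + d x) = (q - tcomb n c0 c) + (q' - tcomb n d0 d)"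
    using adm by (simp add: tcomb_add admissible_coeffs_def)
  also have "\<dots> \<in> Rideal n"
    using R by (rule Rideal.add)
  finally show ?thesis
    using admissible_coeffs_add[OF adm] unfolding spanned_def by blast
qed

lemma spanned_mult:
  assumes "spanned n q" and s: "s \<in> Salg (n - 1)"
  shows "spanned n (s * q)"
proof -
  obtain c0 c where adm: "admissible_coeffs n c0 c" and R: "q - tcomb n c0 c \<in> Rideal n"
    using assms(1) unfolding spanned_def by blast
  have "s * q - tcomb n (s * c0) (\<lambda>x. s * c x) = s * (q - tcomb n c0 c)"
    using adm by (simp add: tcomb_mult admissible_coeffs_def right_diff_distrib)
  also have "\<dots> \<in> Rideal n"
    using R Salg_mono[OF _ s] by (intro Rideal_mult) auto
  finally show ?thesis
    using admissible_coeffs_mult[OF s adm] unfolding spanned_def by blast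
qed

lemma spanned_cong:
  assumes "spanned n q" "q' - q \<in> Rideal n"
  shows "spanned n q'"
proof -
  obtain c0 c where adm: "admissible_coeffs n c0 c" and R: "q - tcomb n c0 c \<in> Rideal n"
    using assms(1) unfolding spanned_def by blast
  have "q' - tcomb n c0 c \<in> Rideal n"
    using Rideal.add[OF assms(2) R] by simp
  with adm show ?thesis
    unfolding spanned_def by blast
qed

lemma spanned_sum:
  "(\<And>x. x \<in> A \<Longrightarrow>
   spanned n (g x)) \<Longrightarrow>
   spanned n (\<Sum>x\<in>A. g x)"
  by (induction A rule: infinite_finite_induct) (auto intro: spanned_add spanned_Salg Salg_zero)

lemma spanned_rvar_power:
  assumes "i \<in> {1..n - 1}"
  shows "spanned n (rvar i n ^ a :: 'k::comm_ring_1 mpoly)"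
proof (cases "a = 0")
  case True
  then show ?thesis
    by (simp add: spanned_Salg Salg_one)
next
  case False
  define c where "c x = (if x = (i, a) then 1 else (0 :: 'k::comm_ring_1 mpoly))" for x
  have sub: "{x. c x \<noteq> 0} \<subseteq> {(i, a)}"
    by (auto simp: c_def)
  then have "finite {x. c x \<noteq> 0}"
    by (rule finite_subset) simp
  with sub have "admissible_coeffs n 0 c"
    unfolding admissible_coeffs_def using False assms
    by (auto simp: shift_idx_def c_def Salg_zero Salg_one)
  moreover have "tcomb n 0 c = rvar i n ^ a"
    unfolding tcomb_def sum_support_superset[OF _ sub] by (simp add: c_def tpow_def)
  ultimately show ?thesis
    unfolding spanned_def using Rideal.zero by force
qed

context
  fixes n :: nat
  assumes n4: "4 \<le> n"
begin

lemma rvar_last_mult_rel: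
  assumes "i \<in> {1..n - 1}" "j \<in> {1..n - 1}" "i \<noteq> j"
  shows "rvar i n * rvar j n - (rvar j i * rvar i n + rvar i j * rvar j n
           + (quad i j (third_index i j) - rvar i j * rvar j i)) \<in> Rideal n"
proof -
  have "rvar i n * rvar j n - (rvar j i * rvar i n + rvar i j * rvar j n
           + (quad i j (third_index i j) - rvar i j * rvar j i))
      = quad i j n - quad i j (third_index i j)"
    by (simp add: rvar_def quad_def algebra_simps)
  also have "\<dots> \<in> Rgen n"
    using assms n4 third_index_in[OF n4, of i j] by (intro quad_diff_in_Rgen) auto
  finally show ?thesis
    using Rgen_subset_Rideal by blast
qed

lemma spanned_rvar_mult_rvar_power:
  assumes i: "i \<in> {1..n - 1}" and j: "j \<in> {1..n - 1}"
  shows "spanned n (rvar j n * rvar i n ^ a :: 'k::comm_ring_1 mpoly)"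
proof (induction a)
  case 0
  then show ?case using spanned_rvar_power[OF j, of 1] by simp
next
  case (Suc a)
  show ?case
  proof (cases "i = j")
    case True
    then show ?thesis using spanned_rvar_power[OF j, of "Suc (Suc a)"] by (simp add: mult.assoc)
  next
    case False
    let ?L = "rvar j i * rvar i n ^ Suc a + rvar i j * (rvar j n * rvar i n ^ a)
                + (quad i j (third_index i j) - rvar i j * rvar j i) * rvar i n ^ a :: 'k mpoly"
    have ij: "2 \<le> n - 1" "i \<in> {1..n - 1} - {j}" "j \<in> {1..n - 1} - {i}"
        "third_index i j \<in> {1..n - 1} - {i, j}"
      using i j False n4 third_index_in[OF n4] by auto
    have L: "spanned n ?L"
    proof (intro spanned_add)
      show "spanned n (rvar j i * rvar i n ^ Suc a :: 'k mpoly)"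
        using ij by (intro spanned_mult spanned_rvar_power rvar_in_Salg i) auto
      show "spanned n (rvar i j * (rvar j n * rvar i n ^ a) :: 'k mpoly)"
        using ij by (intro spanned_mult[OF Suc.IH] rvar_in_Salg) auto
      show "spanned n ((quad i j (third_index i j) - rvar i j * rvar j i) * rvar i n ^ a :: 'k mpoly)"
        using ij by (intro spanned_mult spanned_rvar_power i Salg_diff Salg.mult quad_in_Salg rvar_in_Salg) auto
    qed
    have "rvar j n * rvar i n ^ Suc a - ?L
       = rvar i n ^ a * (rvar i n * rvar j n - (rvar j i * rvar i n + rvar i j * rvar j n
           + (quad i j (third_index i j) - rvar i j * rvar j i)))"
      by (simp add: algebra_simps)
    also have "\<dots> \<in> Rideal n"
      using i j n4 False
      by (intro Rideal_mult rvar_last_mult_rel Salg_power rvar_in_Salg) auto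
    finally show ?thesis
      by (rule spanned_cong[OF L])
  qed
qed

lemma spanned_rvar_mult:
  assumes "spanned n q" and j: "j \<in> {1..n - 1}"
  shows "spanned n (rvar j n * q)"
proof -
  obtain c0 c where adm: "admissible_coeffs n c0 c" and R: "q - tcomb n c0 c \<in> Rideal n"
    using assms(1) unfolding spanned_def by blast
  let ?S = "{x. c x \<noteq> 0}"
  let ?L = "c0 * rvar j n ^ 1 + (\<Sum>x\<in>?S. c x * (rvar j n * rvar (fst x) n ^ snd x))"
  have "spanned n (c0 * rvar j n ^ 1)"
    using adm by (intro spanned_mult spanned_rvar_power j) (auto simp: admissible_coeffs_def)
  moreover have "spanned n (c x * (rvar j n * rvar (fst x) n ^ snd x))" if "x \<in> ?S" for x
    using that adm j
    by (intro spanned_mult[OF spanned_rvar_mult_rvar_power]) (auto simp: admissible_coeffs_def shift_idx_def)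
  ultimately have L: "spanned n ?L"
    by (intro spanned_add spanned_sum)
  have "rvar j n * tcomb n c0 c = ?L"
    unfolding tcomb_def tpow_def distrib_left sum_distrib_left
    by (simp add: mult.left_commute mult.commute)
  then have "rvar j n * q - ?L = rvar j n * (q - tcomb n c0 c)"
    by (simp add: right_diff_distrib)
  also have "\<dots> \<in> Rideal n"
    using R j n4 by (intro Rideal_mult rvar_in_Salg) auto
  finally show ?thesis
    by (rule spanned_cong[OF L])
qed

lemma spanned_prod:
  fixes g :: "'a \<Rightarrow> 'k::comm_ring_1 mpoly"
  assumes "finite F"
    and "\<And>v. v \<in> F \<Longrightarrow> g v \<in> Salg (n - 1) \<or> (\<exists>i\<in>{1..n - 1}. g v = rvar i n)"
  shows "spanned n (\<Prod>v\<in>F. g v ^ e v)"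
  using assms
proof (induction F rule: finite_induct)
  case empty
  then show ?case by (simp add: spanned_Salg Salg_one)
next
  case (insert v F)
  have "spanned n (g v ^ k * (\<Prod>v\<in>F. g v ^ e v))" for k
  proof (induction k)
    case 0
    then show ?case using insert by simp
  next
    case (Suc k)
    from insert.prems[of v] consider "g v \<in> Salg (n - 1)" | i where "i \<in> {1..n - 1}" "g v = rvar i n"
      by auto
    then show ?case
      using Suc.IH by cases (auto simp: mult.assoc intro: spanned_mult spanned_rvar_mult)
  qed
  with insert show ?case by simp
qed

lemma Bminus_rep_spanned:
  fixes p :: "'k::comm_ring_1 mpoly"
  assumes "p \<in> Bminus_rep n"
  shows "spanned n p"
proof -
  have p: "p \<in> Salg n" "\<forall>m\<in>Poly_Mapping.keys p. blockdeg m n = 0"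
    using assms unfolding Bminus_rep_def by auto
  have "p = subst.eval_poly (retract_var n) p"
    using retract_fixes_Salg[OF p(1)] by simp
  also have "\<dots> = (\<Sum>m\<in>Poly_Mapping.keys p. const (Poly_Mapping.lookup p m) *
       (\<Prod>v\<in>Poly_Mapping.keys m. retract_var n v ^ Poly_Mapping.lookup m v))"
    by (simp add: subst.eval_poly_def eval_monom_def)
  also have "spanned n \<dots>"
  proof (intro spanned_sum spanned_mult[OF spanned_prod] Salg.const finite_keys)
    fix m v
    assume "m \<in> Poly_Mapping.keys p" "v \<in> Poly_Mapping.keys m"
    then have "fst v \<noteq> n"
      using p(2) blockdeg_eq_0_keys by blast
    then show "retract_var n v \<in> (Salg (n - 1) :: 'k mpoly set) \<or> (\<exists>i\<in>{1..n - 1}. retract_var n v = rvar i n)"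
      using n4 by (cases "snd v = n") (auto simp: retract_var_def intro!: rvar_in_Salg Salg_zero)
  qed
  finally show ?thesis .
qed

end

section \<open>Independence\<close>

unbundle fps_syntax

definition ambient_Rideal_fls :: "nat \<Rightarrow> 'k::comm_ring_1 mpoly fls set" where
  "ambient_Rideal_fls N = {f. \<forall>e. f $$ e \<in> ambient_Rideal N}"

definition ambient_Rideal_fps :: "nat \<Rightarrow> 'k::comm_ring_1 mpoly fps set" where
  "ambient_Rideal_fps N = {f. \<forall>e. f $ e \<in> ambient_Rideal N}"

lemma ambient_Rideal_fls_mult:
  assumes "f \<in> ambient_Rideal_fls N"
  shows "g * f \<in> ambient_Rideal_fls N"
  unfolding ambient_Rideal_fls_def
proof (intro CollectI allI)
  fix e
  show "(g * f) $$ e \<in> ambient_Rideal N"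
    unfolding fls_times_nth(2) using assms
    by (intro ambient_Rideal_sum ambient_Rideal_mult) (simp add: ambient_Rideal_fls_def)
qed

lemma ambient_Rideal_fls_add:
  "f \<in> ambient_Rideal_fls N \<Longrightarrow>
   g \<in> ambient_Rideal_fls N \<Longrightarrow>
   f + g \<in> ambient_Rideal_fls N"
  unfolding ambient_Rideal_fls_def by (auto intro: ambient_Rideal.add)

lemma ambient_Rideal_fls_diff:
  "f \<in> ambient_Rideal_fls N \<Longrightarrow>
   g \<in> ambient_Rideal_fls N \<Longrightarrow>
   f - g \<in> ambient_Rideal_fls N"
  unfolding ambient_Rideal_fls_def by (auto intro: ambient_Rideal_diff)

lemma ambient_Rideal_fls_zero: "0 \<in> ambient_Rideal_fls N"
  unfolding ambient_Rideal_fls_def by (auto intro: ambient_Rideal.zero)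

lemma ambient_Rideal_fls_const:
  "c \<in> ambient_Rideal N \<Longrightarrow>
   fls_const c \<in> ambient_Rideal_fls N"
  unfolding ambient_Rideal_fls_def by (auto intro: ambient_Rideal.zero)

lemma ambient_Rideal_fls_fps:
  "f \<in> ambient_Rideal_fps N \<Longrightarrow>
   fps_to_fls f \<in> ambient_Rideal_fls N"
  unfolding ambient_Rideal_fls_def ambient_Rideal_fps_def by (auto intro: ambient_Rideal.zero)

lemma ambient_Rideal_fps_mult:
  assumes "f \<in> ambient_Rideal_fps N"
  shows "f * g \<in> ambient_Rideal_fps N"
  unfolding ambient_Rideal_fps_def
proof (intro CollectI allI)
  fix e
  show "(f * g) $ e \<in> ambient_Rideal N"
    unfolding fps_mult_nth using assms
    by (intro ambient_Rideal_sum ambient_Rideal_mult_right) (simp add: ambient_Rideal_fps_def)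
qed

lemma ambient_Rideal_fps_add:
  "f \<in> ambient_Rideal_fps N \<Longrightarrow>
   g \<in> ambient_Rideal_fps N \<Longrightarrow>
   f + g \<in> ambient_Rideal_fps N"
  unfolding ambient_Rideal_fps_def by (auto intro: ambient_Rideal.add)

lemma ambient_Rideal_fps_const_mult:
  "c \<in> ambient_Rideal N \<Longrightarrow>
   fps_const c * g \<in> ambient_Rideal_fps N"
  unfolding ambient_Rideal_fps_def by (auto intro: ambient_Rideal_mult_right)

lemma fls_const_sum: "fls_const (\<Sum>x\<in>A. g x) = (\<Sum>x\<in>A. fls_const (g x :: 'a::comm_ring_1))"
  by (induction A rule: infinite_finite_induct) (auto simp flip: fls_plus_const)

definition fps_geometric :: "'a::comm_ring_1 \<Rightarrow> 'a fps" where
  "fps_geometric a = Abs_fps (\<lambda>e. a ^ e)"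

lemma fps_geometric_inverse: "(1 - fps_const a * fps_X) * fps_geometric a = 1"
proof -
  have "(1 - fps_const a * fps_X) * fps_geometric a = fps_geometric a - fps_const a * (fps_X * fps_geometric a)"
    by (simp only: left_diff_distrib mult_1_left mult.assoc)
  also have "\<dots> = 1"
  proof (rule fps_ext)
    fix e
    show "(fps_geometric a - fps_const a * (fps_X * fps_geometric a)) $ e = 1 $ e"
      by (cases e) (simp_all add: fps_geometric_def)
  qed
  finally show ?thesis .
qed

text \<open>With t_k = X^-1 the relation R^(k,i) forces v^(i)_n - v^(i)_k = quad k i l / (X^-1 - rvar k i),
  which is this power series.\<close>

definition tail_series :: "nat \<Rightarrow> nat \<Rightarrow> 'k::comm_ring_1 mpoly fps" where
  "tail_series k i = fps_const (quad k i (third_index k i)) * fps_X * fps_geometric (rvar k i)"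

lemma tail_series_mult:
  "tail_series k i * (1 - fps_const (rvar k i) * fps_X) = fps_const (quad k i (third_index k i)) * fps_X"
proof -
  have "tail_series k i * (1 - fps_const (rvar k i) * fps_X)
      = fps_const (quad k i (third_index k i)) * fps_X * ((1 - fps_const (rvar k i) * fps_X) * fps_geometric (rvar k i))"
    unfolding tail_series_def by (simp only: ac_simps)
  then show ?thesis
    by (simp add: fps_geometric_inverse)
qed

lemma X_inv_tail_series:
  "(fls_X_inv - fls_const (rvar k j)) * fps_to_fls (tail_series k j)
     = fls_const (quad k j (third_index k j) :: 'k::comm_ring_1 mpoly)"
proof -
  define a where "a = (rvar k j :: 'k mpoly)"
  define H where "H = fps_const (quad k j (third_index k j)) * fps_geometric a"
  have tail: "tail_series k j = fps_X * H"
    unfolding tail_series_def H_def a_def by (simp only: ac_simps)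
  have X_inv: "fls_X_inv * fps_to_fls (fps_X * H) = fps_to_fls H"
    by (simp only: fls_times_fps_to_fls fps_X_to_fls mult.assoc[symmetric] fls_X_inv_times_conv_shift(1)
        fls_X_conv_shift_1 fls_shifted_times_simps(1) fls_shift_fls_shift fls_shift_zero mult_1_left) simp
  have const: "fls_const a * fps_to_fls (fps_X * H) = fps_to_fls (fps_const a * fps_X * H)"
    by (simp only: fls_times_fps_to_fls fps_const_to_fls mult.assoc)
  have "(fls_X_inv - fls_const a) * fps_to_fls (tail_series k j)
      = fps_to_fls (H - fps_const a * fps_X * H)"
    unfolding tail left_diff_distrib X_inv const by simp
  also have "H - fps_const a * fps_X * H
      = fps_const (quad k j (third_index k j)) * ((1 - fps_const a * fps_X) * fps_geometric a)"
    unfolding H_def by (simp only: left_diff_distrib right_diff_distrib mult_1_left mult_1_right ac_simps)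
  finally show ?thesis
    by (simp add: a_def fps_geometric_inverse)
qed

lemma cleared_denominators:
  fixes x A A' b1 b2 a1 a2 S1 S2 :: "'a::comm_ring_1"
  assumes "S1 * (1 - a1 * x) = b1 * x" "S2 * (1 - a2 * x) = b2 * x"
  shows "(A * S2 + A' * S1 + S1 * S2) * ((1 - a1 * x) * (1 - a2 * x))
       = (A * b2 + A' * b1) * x + (b1 * b2 - A * b2 * a1 - A' * b1 * a2) * x ^ 2"
proof -
  have "(A * S2 + A' * S1 + S1 * S2) * ((1 - a1 * x) * (1 - a2 * x))
      = A * (S2 * (1 - a2 * x)) * (1 - a1 * x) + A' * (S1 * (1 - a1 * x)) * (1 - a2 * x)
        + (S1 * (1 - a1 * x)) * (S2 * (1 - a2 * x))"
    by (simp add: algebra_simps)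
  also have "\<dots> = (A * b2 + A' * b1) * x + (b1 * b2 - A * b2 * a1 - A' * b1 * a2) * x ^ 2"
    unfolding assms by (simp add: algebra_simps power2_eq_square)
  finally show ?thesis .
qed

text \<open>The formal point where t_k = X^-1 and the other t_i are power series in X; on it all relations
  of B_n hold modulo \<open>ambient_Rideal (n - 1)\<close>.\<close>

definition laurent_subst :: "nat \<Rightarrow> nat \<Rightarrow> nat \<times> nat \<Rightarrow> 'k::comm_ring_1 mpoly fls" where
  "laurent_subst n k v =
     (if fst v = n then 0
      else if snd v = n then
        (if fst v = k then fls_const (var k (ref_index k)) + fls_X_inv
         else fls_const (var (fst v) k) + fps_to_fls (tail_series k (fst v)))
      else fls_const (var (fst v) (snd v)))"

abbreviation Phi :: "nat \<Rightarrow> nat \<Rightarrow> 'k::comm_ring_1 mpoly \<Rightarrow> 'k mpoly fls" where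
  "Phi n k \<equiv> laurent.eval_poly (laurent_subst n k)"

context
  fixes n k :: nat
  assumes n4: "4 \<le> n" and k: "k \<in> {1..n - 1}"
begin

lemma Phi_Salg: "q \<in> Salg (n - 1) \<Longrightarrow> Phi n k q = fls_const (q :: 'k::comm_ring_1 mpoly)"
proof (induction q rule: Salg.induct)
  case (const c)
  then show ?case by (simp add: laurent.eval_poly_const)
next
  case (gen i v)
  then obtain c where v: "v = (\<Sum>j\<in>{1..n - 1} - {i}. const (c j) * var i j)"
    unfolding Vspace_def by blast
  have "Phi n k v = (\<Sum>j\<in>{1..n - 1} - {i}. fls_const (const (c j)) * fls_const (var i j))"
    unfolding v laurent.eval_poly_sum laurent.eval_poly_mult laurent.eval_poly_const laurent.eval_poly_var
    by (rule sum.cong) (use gen.hyps n4 in \<open>auto simp: laurent_subst_def\<close>)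
  also have "\<dots> = fls_const v"
    by (simp add: v fls_const_sum)
  finally show ?case .
qed (simp_all add: laurent.eval_poly_add laurent.eval_poly_mult fls_plus_const)

lemma Phi_var_diff:
  assumes "i \<in> {1..n - 1}" "j \<in> {1..n - 1}"
  shows "Phi n k (var i n - var i j :: 'k::comm_ring_1 mpoly) =
    (if i = k then fls_X_inv - fls_const (rvar k j)
     else fls_const (var i k - var i j) + fps_to_fls (tail_series k i))"
  using assms n4 k
  by (auto simp: laurent.eval_poly_diff laurent.eval_poly_var laurent_subst_def rvar_def
      fls_minus_const[symmetric] algebra_simps)

lemma tail_series_cross_term:
  assumes "i \<in> {1..n - 1}" "j \<in> {1..n - 1}" "i \<noteq> j" "i \<noteq> k" "j \<noteq> k"
  defines "A \<equiv> var i k - var i j" and "A' \<equiv> var j k - var j i"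
  shows "fps_const A * tail_series k j + fps_const A' * tail_series k i + tail_series k i * tail_series k j
           \<in> (ambient_Rideal_fps (n - 1) :: 'k::comm_ring_1 mpoly fps set)"
proof -
  let ?b1 = "quad k i (third_index k i) :: 'k mpoly" and ?b2 = "quad k j (third_index k j) :: 'k mpoly"
  let ?a1 = "rvar k i :: 'k mpoly" and ?a2 = "rvar k j :: 'k mpoly"
  let ?D = "fps_const A * tail_series k j + fps_const A' * tail_series k i + tail_series k i * tail_series k j"
  let ?U1 = "1 - fps_const ?a1 * fps_X" and ?U2 = "1 - fps_const ?a2 * fps_X"
  define e1 where "e1 = ?b2 - quad k j i"
  define e2 where "e2 = ?b1 - quad k i j"
  have "e1 \<in> Rgen (n - 1)" "e2 \<in> Rgen (n - 1)"
    unfolding e1_def e2_def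
    using assms(1-5) k third_index_in[OF n4, of k j] third_index_in[OF n4, of k i]
    by (auto intro!: quad_diff_in_Rgen)
  then have e1: "e1 \<in> ambient_Rideal (n - 1)" and e2: "e2 \<in> ambient_Rideal (n - 1)"
    using Rgen_subset_ambient_Rideal by auto
  define c1 where "c1 = A * ?b2 + A' * ?b1"
  define c2 where "c2 = ?b1 * ?b2 - A * ?b2 * ?a1 - A' * ?b1 * ?a2"
  have "c1 = A * e1 + A' * e2"
    unfolding c1_def e1_def e2_def A_def A'_def quad_def by (simp add: algebra_simps)
  then have c1: "c1 \<in> ambient_Rideal (n - 1)"
    using e1 e2 by (auto intro: ambient_Rideal.add ambient_Rideal_mult)
  have "c2 = e1 * ((var k i - var k j) * A + e2 - A * ?a1) + e2 * (- ((var k i - var k j) * A') - A' * ?a2)"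
    unfolding c2_def e1_def e2_def A_def A'_def quad_def rvar_def by (simp add: algebra_simps)
  then have c2: "c2 \<in> ambient_Rideal (n - 1)"
    using e1 e2 by (auto intro: ambient_Rideal.add ambient_Rideal_mult_right)
  have "?D * (?U1 * ?U2) = fps_const c1 * fps_X + fps_const c2 * fps_X ^ 2"
    using cleared_denominators[OF tail_series_mult[of k i] tail_series_mult[of k j], of "fps_const A" "fps_const A'"]
    by (simp add: c1_def c2_def)
  then have "?D * (?U1 * ?U2) \<in> ambient_Rideal_fps (n - 1)"
    using c1 c2 by (auto intro: ambient_Rideal_fps_add ambient_Rideal_fps_const_mult)
  then have "?D * (?U1 * ?U2) * (fps_geometric ?a1 * fps_geometric ?a2) \<in> ambient_Rideal_fps (n - 1)"
    by (rule ambient_Rideal_fps_mult)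
  moreover have "?D * (?U1 * ?U2) * (fps_geometric ?a1 * fps_geometric ?a2)
      = ?D * ((?U1 * fps_geometric ?a1) * (?U2 * fps_geometric ?a2))"
    by (simp only: ac_simps)
  then have "?D * (?U1 * ?U2) * (fps_geometric ?a1 * fps_geometric ?a2) = ?D"
    by (simp add: fps_geometric_inverse)
  ultimately show ?thesis
    by simp
qed


lemma Phi_quad_last_at_k:
  assumes "j \<in> {1..n - 1}" "j \<noteq> k"
  shows "Phi n k (quad k j n) = fls_const (quad k j (third_index k j) :: 'k::comm_ring_1 mpoly)"
proof -
  have "Phi n k (quad k j n :: 'k mpoly)
      = (fls_X_inv - fls_const (rvar k j)) * fps_to_fls (tail_series k j)"
    using assms k unfolding quad_def laurent.eval_poly_mult
    by (simp add: Phi_var_diff)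
  then show ?thesis
    by (simp add: X_inv_tail_series)
qed

lemma Phi_quad_last_off_k:
  assumes "i \<in> {1..n - 1}" "j \<in> {1..n - 1}" "i \<noteq> j" "i \<noteq> k" "j \<noteq> k"
  shows "Phi n k (quad i j n) - fls_const (quad i j k) \<in> (ambient_Rideal_fls (n - 1) :: 'k::comm_ring_1 mpoly fls set)"
proof -
  let ?A = "var i k - var i j :: 'k mpoly" and ?A' = "var j k - var j i :: 'k mpoly"
  let ?D = "fps_const ?A * tail_series k j + fps_const ?A' * tail_series k i + tail_series k i * tail_series k j"
  have "Phi n k (quad i j n :: 'k mpoly)
      = (fls_const ?A + fps_to_fls (tail_series k i)) * (fls_const ?A' + fps_to_fls (tail_series k j))"
    using assms unfolding quad_def laurent.eval_poly_mult by (simp add: Phi_var_diff)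
  also have "\<dots> = fls_const (quad i j k) + fps_to_fls ?D"
    by (simp add: quad_def fls_times_fps_to_fls algebra_simps)
  finally have "Phi n k (quad i j n) - fls_const (quad i j k) = fps_to_fls ?D"
    by simp
  also have "\<dots> \<in> ambient_Rideal_fls (n - 1)"
    using assms by (intro ambient_Rideal_fls_fps tail_series_cross_term)
  finally show ?thesis .
qed

lemma Phi_quad_congruent:
  assumes ij: "i \<in> {1..n - 1}" "j \<in> {1..n - 1}" "i \<noteq> j" and x: "x \<in> {1..n} - {i, j}"
  shows "\<exists>m\<in>{1..n - 1} - {i, j}.
           Phi n k (quad i j x) - fls_const (quad i j m) \<in> (ambient_Rideal_fls (n - 1) :: 'k::comm_ring_1 mpoly fls set)"
proof (cases "x = n")
  case False
  then have "x \<in> {1..n - 1} - {i, j}"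
    using x by auto
  moreover have "Phi n k (quad i j x :: 'k mpoly) = fls_const (quad i j x)"
    using ij calculation by (intro Phi_Salg quad_in_Salg) auto
  ultimately show ?thesis
    using ambient_Rideal_fls_zero by force
next
  case True
  consider "i = k" | "j = k" | "i \<noteq> k" "j \<noteq> k"
    by blast
  then show ?thesis
  proof cases
    case 1
    then have "Phi n k (quad i j x) - fls_const (quad i j (third_index k j)) = (0 :: 'k mpoly fls)"
      using ij True by (simp add: Phi_quad_last_at_k)
    then show ?thesis
      using 1 ij third_index_in[OF n4, of k j] ambient_Rideal_fls_zero by (intro bexI[of _ "third_index k j"]) auto
  next
    case 2
    then have "Phi n k (quad i j x) - fls_const (quad i j (third_index k i)) = (0 :: 'k mpoly fls)"
      using 2 ij True by (simp add: quad_commute[of i k] Phi_quad_last_at_k)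
    then show ?thesis
      using 2 ij third_index_in[OF n4, of k i] ambient_Rideal_fls_zero by (intro bexI[of _ "third_index k i"]) auto
  next
    case 3
    then show ?thesis
      using ij True k Phi_quad_last_off_k[of i j] by auto
  qed
qed

lemma Phi_Rgen:
  assumes "r \<in> Rgen n"
  shows "Phi n k r \<in> (ambient_Rideal_fls (n - 1) :: 'k::comm_ring_1 mpoly fls set)"
proof -
  obtain i j x y where r: "r = quad i j x - quad i j y"
    and h: "1 \<le> i" "i < j" "j \<le> n" "x \<in> {1..n} - {i, j}" "y \<in> {1..n} - {i, j}"
    using assms unfolding Rgen_eq_quad_diffs by blast
  show ?thesis
  proof (cases "j = n")
    case True
    then show ?thesis
      unfolding r quad_def
      by (simp add: laurent.eval_poly_diff laurent.eval_poly_mult laurent.eval_poly_var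
          laurent_subst_def ambient_Rideal_fls_zero)
  next
    case False
    then have ij: "i \<in> {1..n - 1}" "j \<in> {1..n - 1}" "i \<noteq> j"
      using h by auto
    obtain mx my where m: "mx \<in> {1..n - 1} - {i, j}" "my \<in> {1..n - 1} - {i, j}"
      and Rx: "Phi n k (quad i j x) - fls_const (quad i j mx) \<in> (ambient_Rideal_fls (n - 1) :: 'k mpoly fls set)"
      and Ry: "Phi n k (quad i j y) - fls_const (quad i j my) \<in> (ambient_Rideal_fls (n - 1) :: 'k mpoly fls set)"
      using Phi_quad_congruent[OF ij h(4)] Phi_quad_congruent[OF ij h(5)] by blast
    have "quad i j mx - quad i j my \<in> (ambient_Rideal (n - 1) :: 'k mpoly set)"
      using ij m quad_diff_in_Rgen Rgen_subset_ambient_Rideal by blast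
    then have "(Phi n k (quad i j x) - fls_const (quad i j mx)) - (Phi n k (quad i j y) - fls_const (quad i j my))
        + fls_const (quad i j mx - quad i j my) \<in> (ambient_Rideal_fls (n - 1) :: 'k mpoly fls set)"
      by (rule ambient_Rideal_fls_add[OF ambient_Rideal_fls_diff[OF Rx Ry] ambient_Rideal_fls_const])
    then show ?thesis
      unfolding r laurent.eval_poly_diff by (simp add: fls_minus_const[symmetric])
  qed
qed

lemma Phi_Rideal:
  "p \<in> Rideal n \<Longrightarrow>
   Phi n k p \<in> (ambient_Rideal_fls (n - 1) :: 'k::comm_ring_1 mpoly fls set)"
proof (induction p rule: Rideal.induct)
  case (gen a r)
  then show ?case
    unfolding laurent.eval_poly_mult by (intro ambient_Rideal_fls_mult Phi_Rgen)
qed (simp_all add: laurent.eval_poly_add ambient_Rideal_fls_zero ambient_Rideal_fls_add)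

lemma Phi_tpow_coeff:
  assumes "i \<in> {1..n - 1}" "0 < a"
  shows "Phi n k (tpow n (i, b)) $$ (- int a) = (if (i, b) = (k, a) then 1 else (0 :: 'k::comm_ring_1 mpoly))"
proof -
  have r: "ref_index i \<in> {1..n - 1} - {i}"
    using n4 by (intro ref_index_in) simp
  have Phi_rvar: "Phi n k (rvar i n :: 'k mpoly)
      = (if i = k then fls_X_inv else fps_to_fls (fps_const (rvar i k) + tail_series k i))"
    using assms r unfolding rvar_def by (auto simp: Phi_var_diff rvar_def)
  show ?thesis
  proof (cases "i = k")
    case True
    then show ?thesis
      using assms Phi_rvar by (simp add: tpow_def laurent.eval_poly_power)
  next
    case False
    then have "Phi n k (tpow n (i, b) :: 'k mpoly) = fps_to_fls ((fps_const (rvar i k) + tail_series k i) ^ b)"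
      using Phi_rvar by (simp only: tpow_def fst_conv snd_conv laurent.eval_poly_power fps_to_fls_power if_False)
    then show ?thesis
      using assms False by simp
  qed
qed

lemma Phi_tcomb_coeff:
  fixes c0 :: "'k::comm_ring_1 mpoly"
  assumes "admissible_coeffs n c0 c"
  shows "Phi n k (tcomb n c0 c) $$ e
       = fls_const c0 $$ e + (\<Sum>x\<in>{x. c x \<noteq> 0}. c x * Phi n k (tpow n x) $$ e)"
proof -
  have "Phi n k (c x) = fls_const (c x)" for x
    using assms unfolding admissible_coeffs_def by (intro Phi_Salg) blast
  then show ?thesis
    using assms unfolding admissible_coeffs_def tcomb_def
    by (simp add: laurent.eval_poly_add laurent.eval_poly_sum laurent.eval_poly_mult
        Phi_Salg fls_nth_sum)
qed

lemma tcomb_in_Rideal_coeff_in_ambient: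
  fixes c0 :: "'k::comm_ring_1 mpoly"
  assumes adm: "admissible_coeffs n c0 c" and R: "tcomb n c0 c \<in> Rideal n" and a: "0 < a"
  shows "c (k, a) \<in> ambient_Rideal (n - 1)"
proof -
  have "Phi n k (tcomb n c0 c) $$ (- int a) \<in> ambient_Rideal (n - 1)"
    using Phi_Rideal[OF R] unfolding ambient_Rideal_fls_def by blast
  also have "Phi n k (tcomb n c0 c) $$ (- int a) = (\<Sum>x\<in>{x. c x \<noteq> 0}. if x = (k, a) then c x else 0)"
  proof -
    have "c x * Phi n k (tpow n x) $$ (- int a) = (if x = (k, a) then c x else 0)" if "c x \<noteq> 0" for x
    proof -
      have "x \<in> shift_idx n"
        using that adm by (auto simp: admissible_coeffs_def)
      then obtain i b where x: "x = (i, b)" "i \<in> {1..n - 1}"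
        by (cases x) (auto simp: shift_idx_def)
      then show ?thesis
        by (simp add: Phi_tpow_coeff[OF x(2) a])
    qed
    then show ?thesis
      using a by (simp add: Phi_tcomb_coeff[OF adm])
  qed
  also have "\<dots> = c (k, a)"
    using adm by (simp add: admissible_coeffs_def)
  finally show ?thesis .
qed

lemma tcomb_in_Rideal_const_in_ambient:
  fixes c0 :: "'k::comm_ring_1 mpoly"
  assumes adm: "admissible_coeffs n c0 c" and R: "tcomb n c0 c \<in> Rideal n"
    and coeffs: "\<forall>x. c x \<in> ambient_Rideal (n - 1)"
  shows "c0 \<in> ambient_Rideal (n - 1)"
proof -
  let ?s = "\<Sum>x\<in>{x. c x \<noteq> 0}. c x * Phi n k (tpow n x) $$ 0"
  have "Phi n k (tcomb n c0 c) $$ 0 \<in> ambient_Rideal (n - 1)"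
    using Phi_Rideal[OF R] unfolding ambient_Rideal_fls_def by blast
  then have "c0 + ?s \<in> ambient_Rideal (n - 1)"
    by (simp add: Phi_tcomb_coeff[OF adm])
  moreover have "?s \<in> ambient_Rideal (n - 1)"
    using coeffs by (intro ambient_Rideal_sum ambient_Rideal_mult_right) auto
  ultimately show ?thesis
    using ambient_Rideal_diff by fastforce
qed

end

lemma tcomb_in_Rideal_imp_coeffs:
  fixes c0 :: "'k::comm_ring_1 mpoly"
  assumes "4 \<le> n" "admissible_coeffs n c0 c" "tcomb n c0 c \<in> Rideal n"
  shows "c0 \<in> Rideal (n - 1) \<and> (\<forall>x. c x \<in> Rideal (n - 1))"
proof -
  have coeffs: "c x \<in> ambient_Rideal (n - 1)" for x
  proof (cases "c x = 0")
    case False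
    then obtain i a where "x = (i, a)" "i \<in> {1..n - 1}" "0 < a"
      using assms(2) by (cases x) (auto simp: admissible_coeffs_def shift_idx_def)
    then show ?thesis
      using tcomb_in_Rideal_coeff_in_ambient[of n i c0 c a] assms by simp
  qed (simp add: ambient_Rideal.zero)
  have "c0 \<in> ambient_Rideal (n - 1)"
    using assms coeffs by (intro tcomb_in_Rideal_const_in_ambient[of n 1]) auto
  moreover have "2 \<le> n - 1"
    using assms(1) by simp
  ultimately show ?thesis
    using assms(2) coeffs Salg_Int_ambient_Rideal unfolding admissible_coeffs_def by blast
qed

theorem lemma4p2:
  fixes n :: nat
  assumes "4 \<le> n"
  shows "\<exists>(b0 :: 'k::field mpoly) (b :: nat \<times> nat \<Rightarrow> 'k mpoly).
    b0 \<in> Salg n \<and> homog (\<lambda>_. 0) b0 \<and>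
    (\<forall>(i, a)\<in>shift_idx n. b (i, a) \<in> Salg n \<and>
        homog (\<lambda>i'. if i' = i then a else 0) (b (i, a))) \<and>
    (\<forall>p\<in>Bminus_rep n. \<exists>c0 c. c0 \<in> Salg (n - 1) \<and>
        finite {x. c x \<noteq> 0} \<and> {x. c x \<noteq> 0} \<subseteq> shift_idx n \<and>
        (\<forall>x. c x \<in> Salg (n - 1)) \<and>
        p - (c0 * b0 + (\<Sum>x\<in>{x. c x \<noteq> 0}. c x * b x)) \<in> Rideal n) \<and>
    (\<forall>c0 c. c0 \<in> Salg (n - 1) \<and> finite {x. c x \<noteq> 0} \<and> {x. c x \<noteq> 0} \<subseteq> shift_idx n \<and>
        (\<forall>x. c x \<in> Salg (n - 1)) \<and>
        c0 * b0 + (\<Sum>x\<in>{x. c x \<noteq> 0}. c x * b x) \<in> Rideal n \<longrightarrow>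
        c0 \<in> Rideal (n - 1) \<and> (\<forall>x. c x \<in> Rideal (n - 1)))"
proof (intro exI[of _ 1] exI[of _ "tpow n"] conjI)
  show "(1 :: 'k mpoly) \<in> Salg n" "homog (\<lambda>_. 0) (1 :: 'k mpoly)"
    by (rule Salg_one, rule homog_one)
  show "\<forall>(i, a)\<in>shift_idx n. (tpow n (i, a) :: 'k mpoly) \<in> Salg n \<and>
          homog (\<lambda>i'. if i' = i then a else 0) (tpow n (i, a) :: 'k mpoly)"
    using assms by (auto simp: shift_idx_def tpow_def intro!: Salg_power rvar_in_Salg homog_rvar_power)
  show "\<forall>p\<in>Bminus_rep n. \<exists>c0 c. c0 \<in> Salg (n - 1) \<and>
          finite {x. c x \<noteq> 0} \<and> {x. c x \<noteq> 0} \<subseteq> shift_idx n \<and> (\<forall>x. c x \<in> Salg (n - 1)) \<and>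
          p - (c0 * 1 + (\<Sum>x\<in>{x. c x \<noteq> 0}. c x * tpow n x)) \<in> (Rideal n :: 'k mpoly set)"
    using Bminus_rep_spanned[OF assms, where 'k = 'k] unfolding spanned_def admissible_coeffs_def tcomb_def
    by simp
  show "\<forall>c0 c. c0 \<in> Salg (n - 1) \<and> finite {x. c x \<noteq> 0} \<and> {x. c x \<noteq> 0} \<subseteq> shift_idx n \<and>
          (\<forall>x. c x \<in> Salg (n - 1)) \<and> c0 * 1 + (\<Sum>x\<in>{x. c x \<noteq> 0}. c x * tpow n x) \<in> Rideal n \<longrightarrow>
          c0 \<in> Rideal (n - 1) \<and> (\<forall>x. c x \<in> (Rideal (n - 1) :: 'k mpoly set))"
    using tcomb_in_Rideal_imp_coeffs[OF assms, where 'k = 'k] unfolding admissible_coeffs_def tcomb_def by auto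
qed

end
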